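(* Let $\mathbf P=(P,\leq,{}',0,1)$ be a poset with complementation. Then the Dedekind-MacNeille completion $\mathrm{DM}(\mathbf P)$ is orthomodular if and only if $\mathbf P$ is a strongly $D$-continuous pseudo-orthomodular poset.
   Context: For $M\subseteq P$, $U(M)$, $L(M)$ are the sets of upper and lower bounds; $U(a,b)=U(\{a,b\})$ etc. For $B,C\subseteq P$, $B\le C$ means $b\le c$ for all $b\in B$, $c\in C$. A poset with complementation is a bounded poset with antitone involution $'$ ($x\le y\Rightarrow y'\le x'$, $x''=x$) with $L(x,x')=\{0\}$, $U(x,x')=\{1\}$; it is pseudo-orthomodular if $L(U(L(x,y),y'),y)=L(x,y)$ for all $x,y$. It is strongly $D$-continuous if for all $B,C\subseteq P$ with $B\le C$: $\bigwedge_{\mathbf P}\{g\in P\mid g\in C\text{ or } g'\in B\}=0$ if and only if every lower bound of $C$ in $P$ is below every upper bound of $B$ in $P$. The Dedekind-MacNeille completion $\mathrm{DM}(\mathbf P)$ is the complete lattice of subsets $B\subseteq P$ with $L(U(B))=B$ under inclusion, with antitone involution $X'=L(\{u'\mid u\in X\})$; a lattice with complementation is orthomodular if $x\vee y=((x\vee y)\wedge y')\vee y$ for all $x,y$. *)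

theory Defs
  imports Main
begin

text \<open>The poset P is the whole type 'a (a bounded partial order, bottom 0 = bot, top 1 = top);
  the complementation is a function cm :: 'a => 'a.\<close>

definition Ub :: "'a::order set \<Rightarrow> 'a set" where
  "Ub M = {x. \<forall>m\<in>M. m \<le> x}"

definition Lb :: "'a::order set \<Rightarrow> 'a set" where
  "Lb M = {x. \<forall>m\<in>M. x \<le> m}"

definition set_le :: "'a::order set \<Rightarrow> 'a set \<Rightarrow> bool" where
  "set_le B C \<longleftrightarrow> (\<forall>b\<in>B. \<forall>c\<in>C. b \<le> c)"

definition poset_compl :: "('a::{order_bot,order_top} \<Rightarrow> 'a) \<Rightarrow> bool" where
  "poset_compl cm \<longleftrightarrow>
     (\<forall>x y. x \<le> y \<longrightarrow> cm y \<le> cm x) \<and>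
     (\<forall>x. cm (cm x) = x) \<and>
     (\<forall>x. Lb {x, cm x} = {bot}) \<and>
     (\<forall>x. Ub {x, cm x} = {top})"

definition pseudo_orthomodular :: "('a::{order_bot,order_top} \<Rightarrow> 'a) \<Rightarrow> bool" where
  "pseudo_orthomodular cm \<longleftrightarrow>
     (\<forall>x y. Lb (Ub (Lb {x, y} \<union> {cm y}) \<union> {y}) = Lb {x, y})"

definition is_Inf :: "'a::order set \<Rightarrow> 'a \<Rightarrow> bool" where
  "is_Inf S a \<longleftrightarrow> a \<in> Lb S \<and> (\<forall>x\<in>Lb S. x \<le> a)"

definition strongly_D_continuous :: "('a::{order_bot,order_top} \<Rightarrow> 'a) \<Rightarrow> bool" where
  "strongly_D_continuous cm \<longleftrightarrow>
     (\<forall>B C. set_le B C \<longrightarrow>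
        (is_Inf {g. g \<in> C \<or> cm g \<in> B} bot \<longleftrightarrow> set_le (Lb C) (Ub B)))"

definition DM :: "'a::order set set" where
  "DM = {B. Lb (Ub B) = B}"

definition DM_join :: "'a::order set \<Rightarrow> 'a set \<Rightarrow> 'a set" where
  "DM_join X Y = Lb (Ub (X \<union> Y))"

definition DM_meet :: "'a::order set \<Rightarrow> 'a set \<Rightarrow> 'a set" where
  "DM_meet X Y = X \<inter> Y"

definition DM_compl :: "('a::order \<Rightarrow> 'a) \<Rightarrow> 'a set \<Rightarrow> 'a set" where
  "DM_compl cm X = Lb (cm ` X)"

definition DM_orthomodular :: "('a::order \<Rightarrow> 'a) \<Rightarrow> bool" where
  "DM_orthomodular cm \<longleftrightarrow>
     (\<forall>X\<in>DM. DM_compl cm X \<in> DM) \<and>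
     (\<forall>X\<in>DM. \<forall>Y\<in>DM. X \<subseteq> Y \<longrightarrow> DM_compl cm Y \<subseteq> DM_compl cm X) \<and>
     (\<forall>X\<in>DM. DM_compl cm (DM_compl cm X) = X) \<and>
     (\<forall>X\<in>DM. DM_meet X (DM_compl cm X) = Lb (Ub {})) \<and>
     (\<forall>X\<in>DM. DM_join X (DM_compl cm X) = UNIV) \<and>
     (\<forall>X\<in>DM. \<forall>Y\<in>DM.
        DM_join X Y = DM_join (DM_meet (DM_join X Y) (DM_compl cm Y)) Y)"

end

theory Submission
  imports Defs
begin

text \<open>DM(P) is always an ortholattice, and an ortholattice is orthomodular iff \<open>W \<le> Z\<close> and
  \<open>Z \<sqinter> W' = 0\<close> force \<open>W = Z\<close>. Elements of DM(P) are the sets \<open>L(C)\<close>; taking \<open>W = L(U(B))\<close>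
  and \<open>Z = L(C)\<close>, the hypothesis \<open>B \<le> C\<close> of strong D-continuity says \<open>W \<le> Z\<close>, its infimum
  is \<open>0\<close> iff \<open>L(C) \<inter> L(B') = {0}\<close>, i.e. iff \<open>Z \<sqinter> W' = 0\<close>, and its conclusion says
  \<open>Z \<le> W\<close>. So strong D-continuity is exactly this criterion, while pseudo-orthomodularity is
  the criterion for \<open>W = L(x,y)\<close> and \<open>Z = L(U(L(x,y),y'),y)\<close>, and comes for free.\<close>

lemma subset_Lb_Ub: "X \<subseteq> Lb (Ub X)"
  by (auto simp: Lb_def Ub_def)

lemma Ub_Lb_Ub: "Ub (Lb (Ub X)) = Ub X"
  by (auto simp: Lb_def Ub_def)

lemma Lb_Ub_Lb: "Lb (Ub (Lb X)) = Lb X"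
  by (auto simp: Lb_def Ub_def)

lemma Lb_Un: "Lb (A \<union> B) = Lb A \<inter> Lb B"
  by (auto simp: Lb_def)

lemma Lb_Ub_least: "X \<subseteq> Lb C \<Longrightarrow> Lb (Ub X) \<subseteq> Lb C"
  by (auto simp: Lb_def Ub_def)

lemma bot_in_Lb: "(bot::'a::order_bot) \<in> Lb X"
  by (simp add: Lb_def)

lemma Lb_UNIV: "Lb (UNIV::'a::order_bot set) = {bot}"
  by (auto simp: Lb_def intro: order.antisym)

lemma set_le_iff_subset_Lb: "set_le B C \<longleftrightarrow> B \<subseteq> Lb C"
  by (auto simp: set_le_def Lb_def)

lemma is_Inf_bot_iff: "is_Inf S (bot::'a::order_bot) \<longleftrightarrow> Lb S = {bot}"
  using bot_in_Lb[of S] by (auto simp: is_Inf_def bot_unique)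

lemma Lb_in_DM: "Lb X \<in> DM"
  by (simp add: DM_def Lb_Ub_Lb)

lemma bot_in_DM: "X \<in> DM \<Longrightarrow> (bot::'a::order_bot) \<in> X"
  using bot_in_Lb[of "Ub X"] by (simp add: DM_def)

lemma DM_join_absorb: "Z \<in> DM \<Longrightarrow> W \<subseteq> Z \<Longrightarrow> DM_join Z W = Z"
  by (simp add: DM_def DM_join_def Un_absorb2)

lemma DM_compl_in_DM: "DM_compl cm X \<in> DM"
  by (simp add: DM_compl_def Lb_in_DM)

lemma DM_compl_antimono: "X \<subseteq> Y \<Longrightarrow> DM_compl cm Y \<subseteq> DM_compl cm X"
  by (auto simp: DM_compl_def Lb_def)

lemma DM_compl_Un: "DM_compl cm (A \<union> B) = DM_compl cm A \<inter> DM_compl cm B"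
  by (simp add: DM_compl_def image_Un Lb_Un)

definition DM_orthomodular_criterion :: "('a::order_bot \<Rightarrow> 'a) \<Rightarrow> bool" where
  "DM_orthomodular_criterion cm \<longleftrightarrow>
     (\<forall>W\<in>DM. \<forall>Z\<in>DM. W \<subseteq> Z \<longrightarrow> Z \<inter> DM_compl cm W = {bot} \<longrightarrow> Z = W)"

context
  fixes cm :: "'a::{order_bot,order_top} \<Rightarrow> 'a"
  assumes compl: "poset_compl cm"
begin

lemma cm_antitone: "x \<le> y \<Longrightarrow> cm y \<le> cm x"
  using compl by (simp add: poset_compl_def)

lemma cm_cm [simp]: "cm (cm x) = x"
  using compl by (simp add: poset_compl_def)

lemma Lb_cm_pair: "Lb {x, cm x} = {bot}"
  using compl by (simp add: poset_compl_def)

lemma Ub_cm_pair: "Ub {x, cm x} = {top}"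
  using compl by (simp add: poset_compl_def)

lemma le_cm_iff: "x \<le> cm y \<longleftrightarrow> y \<le> cm x"
  by (metis cm_antitone cm_cm)

lemma cm_image_Ub: "cm ` Ub M = DM_compl cm M"
proof
  show "cm ` Ub M \<subseteq> DM_compl cm M"
    by (auto simp: DM_compl_def Ub_def Lb_def cm_antitone)
  show "DM_compl cm M \<subseteq> cm ` Ub M"
  proof
    fix z assume "z \<in> DM_compl cm M"
    then have "cm z \<in> Ub M"
      by (auto simp: DM_compl_def Lb_def Ub_def le_cm_iff)
    then show "z \<in> cm ` Ub M"
      by (metis image_eqI cm_cm)
  qed
qed

lemma DM_compl_Lb_Ub: "DM_compl cm (Lb (Ub M)) = DM_compl cm M"
  by (metis cm_image_Ub Ub_Lb_Ub)

lemma Lb_Ub_inter_DM_compl: "Lb (Ub M) \<inter> DM_compl cm M = {bot}"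
proof -
  have "x = bot" if x: "x \<in> Lb (Ub M)" "x \<in> DM_compl cm M" for x
  proof -
    from x(2) have "x \<in> DM_compl cm (Lb (Ub M))"
      by (simp add: DM_compl_Lb_Ub)
    with x(1) have "x \<le> cm x"
      by (auto simp: DM_compl_def Lb_def)
    then have "x \<in> Lb {x, cm x}"
      by (simp add: Lb_def)
    then show ?thesis
      using Lb_cm_pair by blast
  qed
  then show ?thesis
    using bot_in_Lb[of "Ub M"] bot_in_Lb[of "cm ` M"] by (auto simp: DM_compl_def)
qed

lemma DM_inter_DM_compl: "X \<in> DM \<Longrightarrow> X \<inter> DM_compl cm X = {bot}"
  using Lb_Ub_inter_DM_compl[of X] by (simp add: DM_def)

lemma DM_compl_compl: "X \<in> DM \<Longrightarrow> DM_compl cm (DM_compl cm X) = X"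
  unfolding cm_image_Ub[symmetric, of X] by (simp add: DM_def DM_compl_def image_image)

lemma DM_join_compl: "DM_join X (DM_compl cm X) = UNIV"
proof -
  have "u = top" if u: "u \<in> Ub (X \<union> DM_compl cm X)" for u
  proof -
    from u have "cm u \<in> DM_compl cm X"
      by (auto simp: DM_compl_def Ub_def Lb_def cm_antitone)
    with u have "u \<in> Ub {u, cm u}"
      by (auto simp: Ub_def)
    then show ?thesis
      using Ub_cm_pair by blast
  qed
  then show ?thesis
    by (force simp: DM_join_def Lb_def)
qed

lemma DM_orthomodular_iff_law:
  "DM_orthomodular cm \<longleftrightarrow>
     (\<forall>X\<in>DM. \<forall>Y\<in>DM. DM_join X Y = DM_join (DM_meet (DM_join X Y) (DM_compl cm Y)) Y)"
proof -
  have "Lb (Ub {}) = {bot::'a}"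
    by (simp add: Ub_def Lb_UNIV)
  then show ?thesis
    by (simp add: DM_orthomodular_def DM_compl_in_DM DM_compl_antimono DM_compl_compl
        DM_join_compl DM_meet_def DM_inter_DM_compl)
qed

lemma DM_orthomodular_law_if_criterion:
  assumes crit: "DM_orthomodular_criterion cm" and "X \<in> DM" "Y \<in> DM"
  shows "DM_join X Y = DM_join (DM_meet (DM_join X Y) (DM_compl cm Y)) Y"
proof -
  define Z where "Z = DM_join X Y"
  define R where "R = Z \<inter> DM_compl cm Y"
  define W where "W = DM_join R Y"
  have "Y \<subseteq> Z"
    using subset_Lb_Ub[of "X \<union> Y"] by (auto simp: Z_def DM_join_def)
  then have "W \<subseteq> Z"
    by (auto simp: W_def R_def Z_def DM_join_def intro!: Lb_Ub_least)
  moreover have "Z \<inter> DM_compl cm W = {bot}"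
  proof -
    have "Z \<inter> DM_compl cm W \<subseteq> Lb (Ub R) \<inter> DM_compl cm R"
      using subset_Lb_Ub[of R]
      by (auto simp: W_def DM_join_def DM_compl_Lb_Ub DM_compl_Un R_def)
    then show ?thesis
      using Lb_Ub_inter_DM_compl[of R] bot_in_DM[of Z] bot_in_DM[OF DM_compl_in_DM]
      by (auto simp: Z_def DM_join_def Lb_in_DM)
  qed
  ultimately have "Z = W"
    using crit by (simp add: DM_orthomodular_criterion_def W_def Z_def DM_join_def Lb_in_DM)
  then show ?thesis
    by (simp add: W_def R_def Z_def DM_meet_def)
qed

lemma DM_orthomodular_iff_criterion: "DM_orthomodular cm \<longleftrightarrow> DM_orthomodular_criterion cm"
proof
  assume "DM_orthomodular cm"
  then have law: "DM_join Z W = DM_join (DM_meet (DM_join Z W) (DM_compl cm W)) W"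
    if "W \<in> DM" "Z \<in> DM" for W Z
    using that unfolding DM_orthomodular_iff_law by blast
  show "DM_orthomodular_criterion cm"
    unfolding DM_orthomodular_criterion_def
  proof (intro ballI impI)
    fix W Z assume W: "W \<in> DM" and Z: "Z \<in> DM" and "W \<subseteq> Z"
      and gap: "Z \<inter> DM_compl cm W = {bot}"
    have "Z = DM_join Z W"
      using Z \<open>W \<subseteq> Z\<close> by (simp add: DM_join_absorb)
    also have "\<dots> = DM_join (DM_meet (DM_join Z W) (DM_compl cm W)) W"
      by (rule law[OF W Z])
    also have "\<dots> = DM_join {bot} W"
      using Z \<open>W \<subseteq> Z\<close> gap by (simp add: DM_join_absorb DM_meet_def)
    also have "\<dots> = W"
      using W bot_in_DM[OF W] by (simp add: DM_join_def DM_def insert_absorb)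
    finally show "Z = W" .
  qed
next
  assume "DM_orthomodular_criterion cm"
  then show "DM_orthomodular cm"
    unfolding DM_orthomodular_iff_law using DM_orthomodular_law_if_criterion by blast
qed

lemma Lb_Un_cm_vimage: "Lb {g. g \<in> C \<or> cm g \<in> B} = Lb C \<inter> DM_compl cm B"
proof -
  have "cm g \<in> B \<longleftrightarrow> g \<in> cm ` B" for g
    by (metis cm_cm imageE imageI)
  then have "{g. g \<in> C \<or> cm g \<in> B} = C \<union> cm ` B"
    by blast
  then show ?thesis
    by (simp add: DM_compl_def Lb_Un)
qed

lemma DM_orthomodular_criterion_iff_Lb:
  "DM_orthomodular_criterion cm \<longleftrightarrow>
     (\<forall>B C. B \<subseteq> Lb C \<longrightarrow> Lb C \<inter> DM_compl cm B = {bot} \<longrightarrow> Lb C \<subseteq> Lb (Ub B))"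
proof (intro iffI allI impI)
  fix B C :: "'a set"
  assume crit: "DM_orthomodular_criterion cm" and "B \<subseteq> Lb C"
    and gap: "Lb C \<inter> DM_compl cm B = {bot}"
  from \<open>B \<subseteq> Lb C\<close> have "Lb (Ub B) \<subseteq> Lb C"
    by (rule Lb_Ub_least)
  with crit gap have "Lb C = Lb (Ub B)"
    by (simp add: DM_orthomodular_criterion_def DM_compl_Lb_Ub Lb_in_DM)
  then show "Lb C \<subseteq> Lb (Ub B)"
    by simp
next
  assume H: "\<forall>B C. B \<subseteq> Lb C \<longrightarrow> Lb C \<inter> DM_compl cm B = {bot} \<longrightarrow> Lb C \<subseteq> Lb (Ub B)"
  show "DM_orthomodular_criterion cm"
    unfolding DM_orthomodular_criterion_def
  proof (intro ballI impI)
    fix W Z assume "W \<in> DM" "Z \<in> DM" "W \<subseteq> Z" and gap: "Z \<inter> DM_compl cm W = {bot}"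
    then have "Lb (Ub W) = W" "Lb (Ub Z) = Z"
      by (simp_all add: DM_def)
    then have "Z \<subseteq> W"
      using H[rule_format, of W "Ub Z"] \<open>W \<subseteq> Z\<close> gap by simp
    with \<open>W \<subseteq> Z\<close> show "Z = W"
      by blast
  qed
qed

lemma strongly_D_continuous_iff_criterion:
  "strongly_D_continuous cm \<longleftrightarrow> DM_orthomodular_criterion cm"
proof -
  have "strongly_D_continuous cm \<longleftrightarrow>
      (\<forall>B C. B \<subseteq> Lb C \<longrightarrow> (Lb C \<inter> DM_compl cm B = {bot} \<longleftrightarrow> Lb C \<subseteq> Lb (Ub B)))"
    by (simp add: strongly_D_continuous_def set_le_iff_subset_Lb is_Inf_bot_iff
        Lb_Un_cm_vimage)
  moreover have "Lb C \<inter> DM_compl cm B = {bot}" if "Lb C \<subseteq> Lb (Ub B)" for B C :: "'a set"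
    using that Lb_Ub_inter_DM_compl[of B] bot_in_Lb[of C] bot_in_DM[OF DM_compl_in_DM]
    by blast
  ultimately show ?thesis
    unfolding DM_orthomodular_criterion_iff_Lb by blast
qed

lemma pseudo_orthomodular_if_criterion:
  assumes crit: "DM_orthomodular_criterion cm"
  shows "pseudo_orthomodular cm"
  unfolding pseudo_orthomodular_def
proof (intro allI)
  fix x y :: 'a
  define A where "A = Lb {x, y}"
  define T where "T = Ub (A \<union> {cm y})"
  have V: "Lb (T \<union> {y}) = Lb T \<inter> Lb {y}"
    by (rule Lb_Un)
  have "A \<subseteq> Lb (T \<union> {y})"
    using subset_Lb_Ub[of "A \<union> {cm y}"] by (auto simp: V T_def A_def Lb_def)
  moreover have "Lb (T \<union> {y}) \<inter> DM_compl cm A = {bot}"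
  proof -
    have "Lb (T \<union> {y}) \<inter> DM_compl cm A \<subseteq> Lb T \<inter> DM_compl cm (A \<union> {cm y})"
      by (auto simp: V DM_compl_Un DM_compl_def Lb_def)
    then show ?thesis
      using Lb_Ub_inter_DM_compl[of "A \<union> {cm y}"] bot_in_Lb[of "T \<union> {y}"]
        bot_in_DM[OF DM_compl_in_DM]
      by (auto simp: T_def)
  qed
  ultimately have "Lb (T \<union> {y}) = A"
    using crit by (simp add: DM_orthomodular_criterion_def A_def Lb_in_DM)
  then show "Lb (Ub (Lb {x, y} \<union> {cm y}) \<union> {y}) = Lb {x, y}"
    by (simp add: T_def A_def)
qed

end

theorem theorem9:
  fixes cm :: "'a::{order_bot,order_top} \<Rightarrow> 'a"
  assumes "poset_compl cm"
  shows "DM_orthomodular cm \<longleftrightarrow> pseudo_orthomodular cm \<and> strongly_D_continuous cm"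
  using DM_orthomodular_iff_criterion[OF assms] strongly_D_continuous_iff_criterion[OF assms]
    pseudo_orthomodular_if_criterion[OF assms]
  by blast

end
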